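(* For $n\ge1$ let $\widehat x^n(t):=\sum_{m=0}^{n-1}\sum_{k=0}^{2^m-1}e_{m,k}(t)$, $t\in[0,1]$, let $J_n:=\frac13(2^n-(-1)^n)$ (the Jacobsthal numbers), and let $$M_n:=\frac13\Big(2+\sqrt2+(-1)^{n+1}2^{-n}(\sqrt2-1)\Big)-2^{-n/2}.$$ Then $\widehat x^n$ has exactly two maximal points on $[0,1]$, namely $t_n^-:=2^{-n}J_n\in[0,1/2]$ and $t_n^+:=1-t_n^-\in[1/2,1]$, and $$\max_{t\in[0,1]}\widehat x^n(t)=\widehat x^n(t_n^-)=\widehat x^n(t_n^+)=M_n.$$
   Context: The Faber--Schauder functions are $e_{0,0}(t):=(\min\{t,1-t\})^+$ and $e_{m,k}(t):=2^{-m/2}e_{0,0}(2^m t-k)$ for $t\in\mathbb R$, $m\ge1$, $k\in\mathbb Z$. *)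

theory Defs
  imports Complex_Main
begin

definition e00 :: "real \<Rightarrow> real" where
  "e00 t = max 0 (min t (1 - t))"

definition faber :: "nat \<Rightarrow> int \<Rightarrow> real \<Rightarrow> real" where
  "faber m k t = 2 powr (- real m / 2) * e00 (2 ^ m * t - real_of_int k)"

definition xhat :: "nat \<Rightarrow> real \<Rightarrow> real" where
  "xhat n t = (\<Sum>m<n. \<Sum>k<(2::nat) ^ m. faber m (int k) t)"

definition jacobsthal :: "nat \<Rightarrow> real" where
  "jacobsthal n = (2 ^ n - (-1) ^ n) / 3"

definition Mn :: "nat \<Rightarrow> real" where
  "Mn n = (2 + sqrt 2 + (-1) ^ (n + 1) * 2 powr (- real n) * (sqrt 2 - 1)) / 3
          - 2 powr (- real n / 2)"

definition t_minus :: "nat \<Rightarrow> real" where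
  "t_minus n = 2 powr (- real n) * jacobsthal n"

definition t_plus :: "nat \<Rightarrow> real" where
  "t_plus n = 1 - t_minus n"

end

theory Submission
  imports Defs
begin

text \<open>
  Each level of hats is symmetric about \<open>1/2\<close>, and on \<open>[0,1/2]\<close> level \<open>m + 1\<close> is level
  \<open>m\<close> composed with \<open>t \<mapsto> 2t\<close>. Hence \<open>xhat\<close> is symmetric and on \<open>[0,1/2]\<close> satisfies
  \<open>xhat (n+1) t = t + xhat n (2t) / \<surd>2\<close>. Induction on \<open>n\<close> shows that on \<open>[0,1/2]\<close> the
  function lies below a tent with apex \<open>(t_minus n, Mn n)\<close>, rising with slope \<open>1\<close> and
  falling with slope \<open>\<surd>2 - 1\<close>, and touches it at the apex: the left flank of the new tent
  comes from the bound \<open>xhat n \<le> Mn n\<close>, the right flank from the left flank of the old tent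
  reflected through \<open>1/2\<close>. The apex moves as \<open>p \<mapsto> (1 - p)/2\<close>, which produces the
  Jacobsthal numbers, and its height as \<open>M \<mapsto> (1 - p)/2 + M/\<surd>2\<close>.
\<close>

lemma e00_reflect: "e00 (1 - x) = e00 x"
  by (simp add: e00_def min.commute)

lemma e00_eq_0: "x \<le> 0 \<Longrightarrow> e00 x = 0"
  by (simp add: e00_def)

lemma e00_eq_self: "0 \<le> x \<Longrightarrow> x \<le> 1/2 \<Longrightarrow> e00 x = x"
  by (simp add: e00_def)

definition hat_layer :: "nat \<Rightarrow> real \<Rightarrow> real" where
  "hat_layer m t = (\<Sum>k<(2::nat)^m. e00 (2^m * t - real k))"

lemma powr_minus_half_eq: "(2::real) powr (- real m / 2) = 1 / sqrt 2 ^ m"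
proof -
  have "(2::real) powr (- real m / 2) = (2 powr (1/2)) powr (- real m)"
    by (simp add: powr_powr)
  also have "\<dots> = 1 / sqrt 2 ^ m"
    by (simp add: powr_half_sqrt powr_minus_divide powr_realpow)
  finally show ?thesis .
qed

lemma xhat_eq_hat_layers: "xhat n t = (\<Sum>m<n. hat_layer m t / sqrt 2 ^ m)"
  unfolding xhat_def hat_layer_def faber_def powr_minus_half_eq
  by (simp add: sum_divide_distrib)

lemma hat_layer_reflect: "hat_layer m (1 - t) = hat_layer m t"
proof -
  let ?N = "(2::nat)^m"
  have "hat_layer m t = (\<Sum>k<?N. e00 (2^m * t - real (?N - Suc k)))"
    unfolding hat_layer_def by (rule sum.nat_diff_reindex[symmetric])
  also have "\<dots> = (\<Sum>k<?N. e00 (2^m * (1 - t) - real k))"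
  proof (rule sum.cong)
    fix k assume "k \<in> {..<?N}"
    then have "2^m * t - real (?N - Suc k) = 1 - (2^m * (1 - t) - real k)"
      by (simp add: of_nat_diff algebra_simps)
    then show "e00 (2^m * t - real (?N - Suc k)) = e00 (2^m * (1 - t) - real k)"
      by (simp add: e00_reflect)
  qed simp
  finally show ?thesis
    unfolding hat_layer_def by simp
qed

text \<open>On \<open>[0,1/2]\<close> the upper half of the hats of level \<open>m + 1\<close> vanishes.\<close>

lemma hat_layer_Suc:
  assumes "0 \<le> t" "t \<le> 1/2"
  shows "hat_layer (Suc m) t = hat_layer m (2 * t)"
proof -
  let ?N = "(2::nat)^m"
  have "hat_layer (Suc m) t = (\<Sum>k<2 * ?N. e00 (2^m * (2*t) - real k))"
    unfolding hat_layer_def by (simp add: mult.assoc mult.left_commute)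
  also have "\<dots> = (\<Sum>k<?N. e00 (2^m * (2*t) - real k))"
  proof (rule sum.mono_neutral_right)
    show "\<forall>k\<in>{..<2 * ?N} - {..<?N}. e00 (2^m * (2*t) - real k) = 0"
    proof
      fix k assume "k \<in> {..<2 * ?N} - {..<?N}"
      then have "(2::real)^m \<le> real k"
        by (metis Diff_iff lessThan_iff not_less of_nat_le_iff of_nat_numeral of_nat_power)
      moreover have "(2::real)^m * (2*t) \<le> 2^m"
        using assms by simp
      ultimately show "e00 (2^m * (2*t) - real k) = 0"
        by (intro e00_eq_0) linarith
    qed
  qed auto
  finally show ?thesis
    unfolding hat_layer_def .
qed

lemma xhat_reflect: "xhat n (1 - t) = xhat n t"
  unfolding xhat_eq_hat_layers by (simp add: hat_layer_reflect)

lemma xhat_Suc: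
  assumes "0 \<le> t" "t \<le> 1/2"
  shows "xhat (Suc n) t = t + xhat n (2 * t) / sqrt 2"
proof -
  have "xhat (Suc n) t = hat_layer 0 t + (\<Sum>m<n. hat_layer (Suc m) t / sqrt 2 ^ Suc m)"
    unfolding xhat_eq_hat_layers by (subst sum.lessThan_Suc_shift) simp
  also have "hat_layer 0 t = t"
    unfolding hat_layer_def using assms by (simp add: e00_eq_self)
  also have "(\<Sum>m<n. hat_layer (Suc m) t / sqrt 2 ^ Suc m) = xhat n (2 * t) / sqrt 2"
    using assms by (simp add: xhat_eq_hat_layers hat_layer_Suc sum_divide_distrib mult.commute)
  finally show ?thesis .
qed

lemma xhat_1: "xhat 1 t = e00 t"
  by (simp add: xhat_def faber_def)

lemma t_minus_eq: "t_minus n = (1 - (-1)^n / 2^n) / 3"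
  by (simp add: t_minus_def jacobsthal_def powr_minus_divide powr_realpow field_simps)

lemma Mn_eq: "Mn n = (2 + sqrt 2 - (-1)^n / 2^n * (sqrt 2 - 1)) / 3 - 1 / sqrt 2 ^ n"
  unfolding Mn_def powr_minus_half_eq by (simp add: powr_minus_divide powr_realpow)

lemma t_minus_Suc: "t_minus (Suc n) = (1 - t_minus n) / 2"
  by (simp add: t_minus_eq field_simps)

lemma Mn_Suc: "Mn (Suc n) = t_minus (Suc n) + Mn n / sqrt 2"
proof -
  have sqrt2_sqrt2: "sqrt 2 * (sqrt 2 * x) = 2 * x" for x :: real
    by (simp flip: mult.assoc)
  show ?thesis
    unfolding Mn_eq t_minus_eq by (simp add: field_simps sqrt2_sqrt2)
qed

definition tent_peak :: "real \<Rightarrow> (real \<Rightarrow> real) \<Rightarrow> real \<Rightarrow> real \<Rightarrow> bool" where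
  "tent_peak c f p M \<longleftrightarrow> p \<in> {0..1/2} \<and> f p = M
     \<and> (\<forall>t\<in>{0..p}. f t \<le> M - (p - t)) \<and> (\<forall>t\<in>{p..1/2}. f t \<le> M - c * (t - p))"

lemma tent_peak_le:
  assumes "tent_peak c f p M" "c \<ge> 0" "\<And>t. f (1 - t) = f t" "t \<in> {0..1}"
  shows "f t \<le> M"
proof -
  have "f s \<le> M" if "s \<in> {0..1/2}" for s
  proof (cases "s \<le> p")
    case True
    then have "f s \<le> M - (p - s)"
      using assms(1) that unfolding tent_peak_def by auto
    with True show ?thesis
      by simp
  next
    case False
    then have "f s \<le> M - c * (s - p)"
      using assms(1) that unfolding tent_peak_def by auto
    moreover have "c * (s - p) \<ge> 0"
      using False \<open>c \<ge> 0\<close> by simp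
    ultimately show ?thesis
      by simp
  qed
  from this[of t] this[of "1 - t"] assms(3,4) show ?thesis
    by (cases "t \<le> 1/2") auto
qed

lemma tent_peak_unique:
  assumes "tent_peak c f p M" "c > 0" "t \<in> {0..1/2}" "f t \<ge> M"
  shows "t = p"
proof (rule ccontr)
  assume "t \<noteq> p"
  then consider "t < p" | "p < t"
    by linarith
  then show False
  proof cases
    case 1
    then show False
      using assms unfolding tent_peak_def by force
  next
    case 2
    then have "f t \<le> M - c * (t - p)"
      using assms(1,3) unfolding tent_peak_def by auto
    moreover have "c * (t - p) > 0"
      using 2 assms(2) by simp
    ultimately show False
      using assms(4) by simp
  qed
qed

lemma tent_peak_maxima:
  assumes peak: "tent_peak c f p M" and "c > 0" and sym: "\<And>t. f (1 - t) = f t"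
  shows "{t \<in> {0..1}. \<forall>s\<in>{0..1}. f s \<le> f t} = {p, 1 - p}"
    and "Sup (f ` {0..1}) = M"
proof -
  have p: "p \<in> {0..1/2}" "f p = M" "f (1 - p) = M"
    using peak sym unfolding tent_peak_def by auto
  have le: "f t \<le> M" if "t \<in> {0..1}" for t
    using tent_peak_le[OF peak] \<open>c > 0\<close> sym that by simp
  have "t = p \<or> t = 1 - p" if "t \<in> {0..1}" "f t \<ge> M" for t
  proof (cases "t \<le> 1/2")
    case True
    then show ?thesis
      using tent_peak_unique[OF peak \<open>c > 0\<close>, of t] that by simp
  next
    case False
    then show ?thesis
      using tent_peak_unique[OF peak \<open>c > 0\<close>, of "1 - t"] sym[of t] that by simp
  qed
  then show "{t \<in> {0..1}. \<forall>s\<in>{0..1}. f s \<le> f t} = {p, 1 - p}"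
    using p le by (auto dest!: bspec[of _ _ p])
  show "Sup (f ` {0..1}) = M"
    using p le by (intro cSup_eq_maximum) (auto intro!: image_eqI[of M f p])
qed

text \<open>
  The slope \<open>2a - 1\<close> is reproduced: right of the new apex, \<open>g (2u) = g (1 - 2u)\<close> falls at
  rate \<open>2\<close> along the rising flank of the old tent, so \<open>u + a g(2u)\<close> falls at rate \<open>2a - 1\<close>.
\<close>

lemma tent_peak_step:
  assumes peak: "tent_peak (2 * a - 1) g p M" and "a \<ge> 1/2" and sym: "\<And>t. g (1 - t) = g t"
    and f: "\<And>u. u \<in> {0..1/2} \<Longrightarrow> f u = u + a * g (2 * u)"
  shows "tent_peak (2 * a - 1) f ((1 - p) / 2) ((1 - p) / 2 + a * M)"
proof -
  have p: "0 \<le> p" "p \<le> 1/2" "g p = M"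
    and left: "\<And>t. t \<in> {0..p} \<Longrightarrow> g t \<le> M - (p - t)"
    using peak unfolding tent_peak_def by auto
  have le: "g t \<le> M" if "t \<in> {0..1}" for t
    using tent_peak_le[OF peak] \<open>a \<ge> 1/2\<close> sym that by simp
  have apex: "f ((1 - p) / 2) = (1 - p) / 2 + a * M"
    using f[of "(1 - p) / 2"] p sym[of p] by (simp add: diff_divide_distrib)
  have rise: "f u \<le> (1 - p) / 2 + a * M - ((1 - p) / 2 - u)" if "u \<in> {0..(1 - p) / 2}" for u
  proof -
    have "a * g (2 * u) \<le> a * M"
      using le[of "2 * u"] that p \<open>a \<ge> 1/2\<close> by (intro mult_left_mono) auto
    then show ?thesis
      using f[of u] that p by simp
  qed
  have fall: "f u \<le> (1 - p) / 2 + a * M - (2 * a - 1) * (u - (1 - p) / 2)"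
    if u: "u \<in> {(1 - p) / 2..1/2}" for u
  proof -
    have "g (2 * u) = g (1 - 2 * u)"
      using sym[of "2 * u"] by simp
    also have "\<dots> \<le> M - (p - (1 - 2 * u))"
      using left[of "1 - 2 * u"] u by simp
    finally have "a * g (2 * u) \<le> a * (M - (p - (1 - 2 * u)))"
      using \<open>a \<ge> 1/2\<close> by (intro mult_left_mono) auto
    moreover have "u + a * (M - (p - (1 - 2 * u)))
        = (1 - p) / 2 + a * M - (2 * a - 1) * (u - (1 - p) / 2)"
      by (simp add: field_simps)
    ultimately show ?thesis
      using f[of u] u p by simp
  qed
  show ?thesis
    unfolding tent_peak_def using p apex rise fall by auto
qed

lemma xhat_tent_peak:
  assumes "n \<ge> 1"
  shows "tent_peak (sqrt 2 - 1) (xhat n) (t_minus n) (Mn n)"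
  using assms
proof (induction n rule: nat_induct_at_least)
  case base
  have apex: "t_minus 1 = 1/2" "Mn 1 = 1/2"
    by (simp_all add: t_minus_eq Mn_eq real_div_sqrt field_simps)
  show "tent_peak (sqrt 2 - 1) (xhat 1) (t_minus 1) (Mn 1)"
    unfolding tent_peak_def xhat_1 apex by (auto simp: e00_eq_self)
next
  case (Suc n)
  have "sqrt 2 - 1 = 2 * (1 / sqrt 2) - 1" and "(1::real) / sqrt 2 \<ge> 1/2"
    using sqrt2_less_2 by (simp_all add: real_div_sqrt)
  moreover have "xhat (Suc n) u = u + 1 / sqrt 2 * xhat n (2 * u)" if "u \<in> {0..1/2}" for u
    using xhat_Suc that by simp
  ultimately have "tent_peak (sqrt 2 - 1) (xhat (Suc n))
      ((1 - t_minus n) / 2) ((1 - t_minus n) / 2 + 1 / sqrt 2 * Mn n)"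
    using tent_peak_step[of "1 / sqrt 2"] Suc.IH xhat_reflect by metis
  then show ?case
    by (simp add: Mn_Suc t_minus_Suc)
qed

theorem lemma3p1:
  fixes n :: nat
  assumes "n \<ge> 1"
  shows "t_minus n \<in> {0..1/2} \<and> t_plus n \<in> {1/2..1}
    \<and> {t \<in> {0..1}. \<forall>s\<in>{0..1}. xhat n s \<le> xhat n t} = {t_minus n, t_plus n}
    \<and> Sup (xhat n ` {0..1}) = Mn n
    \<and> xhat n (t_minus n) = Mn n \<and> xhat n (t_plus n) = Mn n"
proof -
  have peak: "tent_peak (sqrt 2 - 1) (xhat n) (t_minus n) (Mn n)"
    using xhat_tent_peak[OF assms] .
  have slope: "sqrt 2 - 1 > (0::real)"
    by simp
  have "t_minus n \<in> {0..1/2}" "xhat n (t_minus n) = Mn n"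
    using peak unfolding tent_peak_def by auto
  then show ?thesis
    using tent_peak_maxima[OF peak slope xhat_reflect] xhat_reflect[of n "t_minus n"]
    by (auto simp: t_plus_def)
qed

end
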